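(* Let $m\ge n$ and $s,r$ be positive integers with $s\le m$ and $r\le n$, and let $A\in\mathbb{R}^{m\times n}$. For indeterminates $y,z$ define the $m\times n$ matrix \[ \tilde A(y,z)=\begin{pmatrix}yI_s&0\\0&I_{m-s}\end{pmatrix}A\begin{pmatrix}zI_r&0\\0&I_{n-r}\end{pmatrix} \] and $\theta_A(x,y,z)=\det\big(xI_n+\tilde A(y,z)^T\tilde A(y,z)\big)$. Then \[ \theta_A(x,y,z)=\sum_{j=0}^n\sum_{p=0}^s\sum_{q=0}^r x^{n-j}y^{2p}z^{2q}A^j_{p,q},\qquad A^j_{p,q}=\sum_{\substack{X\subseteq[m],\,Y\subseteq[n],\ |X|=|Y|=j\\ |X\cap[s]|=p,\ |Y\cap[r]|=q}}[A]_{X,Y}^2 . \]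
   Context: For a matrix $C$ and index sets $S,T$ with $|S|=|T|$, $[C]_{S,T}=\det(\{C_{ij}\}_{i\in S,j\in T})$ is the $(S,T)$-minor, with $[C]_{\varnothing,\varnothing}=1$. $[N]=\{1,\dots,N\}$. *)

theory Defs
  imports "Jordan_Normal_Form.Determinant" "Jordan_Normal_Form.DL_Submatrix"
begin

text \<open>The (S,T)-minor of C: determinant of the submatrix with rows in S and columns in T
  (indices are 0-based; rows/columns kept in increasing order).\<close>
definition minor :: "'a::comm_ring_1 mat \<Rightarrow> nat set \<Rightarrow> nat set \<Rightarrow> 'a" where
  "minor C S T = det (submatrix C S T)"

definition scal_block :: "nat \<Rightarrow> nat \<Rightarrow> 'a::comm_ring_1 \<Rightarrow> 'a mat" where
  "scal_block d k c = four_block_mat (c \<cdot>\<^sub>m 1\<^sub>m k) (0\<^sub>m k (d - k)) (0\<^sub>m (d - k) k) (1\<^sub>m (d - k))"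

definition A_tilde :: "nat \<Rightarrow> nat \<Rightarrow> nat \<Rightarrow> nat \<Rightarrow> real mat \<Rightarrow> real \<Rightarrow> real \<Rightarrow> real mat" where
  "A_tilde m n s r A y z = scal_block m s y * A * scal_block n r z"

definition theta :: "nat \<Rightarrow> nat \<Rightarrow> nat \<Rightarrow> nat \<Rightarrow> real mat \<Rightarrow> real \<Rightarrow> real \<Rightarrow> real \<Rightarrow> real" where
  "theta m n s r A x y z =
     det (x \<cdot>\<^sub>m 1\<^sub>m n + transpose_mat (A_tilde m n s r A y z) * A_tilde m n s r A y z)"

definition coeffA :: "nat \<Rightarrow> nat \<Rightarrow> nat \<Rightarrow> nat \<Rightarrow> real mat \<Rightarrow> nat \<Rightarrow> nat \<Rightarrow> nat \<Rightarrow> real" where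
  "coeffA m n s r A j p q =
     (\<Sum>X\<in>{X. X \<subseteq> {0..<m} \<and> card X = j \<and> card (X \<inter> {0..<s}) = p}.
       \<Sum>Y\<in>{Y. Y \<subseteq> {0..<n} \<and> card Y = j \<and> card (Y \<inter> {0..<r}) = q}.
         (minor A X Y)\<^sup>2)"

end

theory Submission
  imports Defs
begin

text \<open>
  Expanding \<open>det (x I + N)\<close> multilinearly gives the sum of \<open>x^(n - |T|) det N[T,T]\<close> over the
  principal minors of \<open>N\<close>. For the Gram matrix \<open>N = B\<^sup>T B\<close> of \<open>B = A_tilde\<close>, the Cauchy--Binet
  formula writes \<open>det N[T,T]\<close> as the sum of \<open>det B[X,T]\<^sup>2\<close> over the row sets \<open>X\<close> with
  \<open>|X| = |T|\<close>. Scaling the first \<open>s\<close> rows by \<open>y\<close> and the first \<open>r\<close> columns by \<open>z\<close> multiplies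
  \<open>[A]_{X,T}\<close> by \<open>y^|X \<inter> [s]| z^|T \<inter> [r]|\<close>, so grouping the pairs \<open>(X, T)\<close> by
  \<open>(|T|, |X \<inter> [s]|, |T \<inter> [r]|)\<close> produces the coefficients \<open>A^j_{p,q}\<close>.
\<close>

section \<open>Principal minor expansion\<close>

lemma bij_betw_pick:
  assumes "finite T"
  shows "bij_betw (pick T) {0..<card T} T"
proof -
  have "strict_mono_on {0..<card T} (pick T)"
    by (rule strict_mono_onI) (simp add: pick_mono_le)
  then have inj: "inj_on (pick T) {0..<card T}"
    by (rule strict_mono_on_imp_inj_on)
  have "pick T ` {0..<card T} \<subseteq> T"
    by (auto intro: pick_in_set_le)
  moreover have "card (pick T ` {0..<card T}) = card T"
    by (simp add: card_image[OF inj])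
  ultimately have "pick T ` {0..<card T} = T"
    by (rule card_subset_eq[OF assms])
  with inj show ?thesis
    by (simp add: bij_betw_def)
qed

lemma sum_permutes_reindex_bij_betw:
  fixes G :: "'b \<Rightarrow> 'b \<Rightarrow> 'c::comm_ring_1"
  assumes e: "bij_betw e A B" and "finite A"
  shows "(\<Sum>\<sigma> | \<sigma> permutes B. of_int (sign \<sigma>) * (\<Prod>b\<in>B. G b (\<sigma> b)))
       = (\<Sum>\<tau> | \<tau> permutes A. of_int (sign \<tau>) * (\<Prod>a\<in>A. G (e a) (e (\<tau> a))))"
proof -
  let ?h = "map_permutation A e" and ?g = "map_permutation B (inv_into A e)"
  have inj: "inj_on e A"
    using e by (simp add: bij_betw_def)
  have e': "bij_betw (inv_into A e) B A"
    using e by (rule bij_betw_inv_into)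
  have "bij_betw ?h {\<tau>. \<tau> permutes A} {\<sigma>. \<sigma> permutes B}"
  proof (rule bij_betw_byWitness[where f' = ?g])
    show "\<forall>\<tau>\<in>{\<tau>. \<tau> permutes A}. ?g (?h \<tau>) = \<tau>"
      using map_permutation_compose_inv[OF e] inv_into_f_f[OF inj] by blast
    show "\<forall>\<sigma>\<in>{\<sigma>. \<sigma> permutes B}. ?h (?g \<sigma>) = \<sigma>"
      using map_permutation_compose_inv[OF e'] e by (auto simp: bij_betw_def f_inv_into_f)
  qed (use map_permutation_permutes[OF e] map_permutation_permutes[OF e'] in auto)
  then have "(\<Sum>\<sigma> | \<sigma> permutes B. of_int (sign \<sigma>) * (\<Prod>b\<in>B. G b (\<sigma> b)))
      = (\<Sum>\<tau> | \<tau> permutes A. of_int (sign (?h \<tau>)) * (\<Prod>b\<in>B. G b (?h \<tau> b)))"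
    by (rule sum.reindex_bij_betw[symmetric])
  also have "\<dots> = (\<Sum>\<tau> | \<tau> permutes A. of_int (sign \<tau>) * (\<Prod>a\<in>A. G (e a) (e (\<tau> a))))"
  proof (rule sum.cong[OF refl])
    fix \<tau> assume "\<tau> \<in> {\<tau>. \<tau> permutes A}"
    then have \<tau>: "\<tau> permutes A" by simp
    have "(\<Prod>b\<in>B. G b (?h \<tau> b)) = (\<Prod>a\<in>A. G (e a) (?h \<tau> (e a)))"
      by (rule prod.reindex_bij_betw[OF e, symmetric])
    also have "\<dots> = (\<Prod>a\<in>A. G (e a) (e (\<tau> a)))"
      by (rule prod.cong) (simp_all add: map_permutation_apply[OF inj])
    finally show "of_int (sign (?h \<tau>)) * (\<Prod>b\<in>B. G b (?h \<tau> b))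
        = of_int (sign \<tau>) * (\<Prod>a\<in>A. G (e a) (e (\<tau> a)))"
      by (simp add: sign_map_permutation[OF inj \<tau> \<open>finite A\<close>])
  qed
  finally show ?thesis .
qed

lemma
  assumes "M \<in> carrier_mat m n" and "X \<subseteq> {0..<m}" and "Y \<subseteq> {0..<n}"
  shows carrier_submatrix: "submatrix M X Y \<in> carrier_mat (card X) (card Y)"
    and index_submatrix: "\<lbrakk>a < card X; b < card Y\<rbrakk>
      \<Longrightarrow> submatrix M X Y $$ (a, b) = M $$ (pick X a, pick Y b)"
proof -
  have rows: "{i. i < dim_row M \<and> i \<in> X} = X" and cols: "{j. j < dim_col M \<and> j \<in> Y} = Y"
    using assms by auto
  show "submatrix M X Y \<in> carrier_mat (card X) (card Y)"
    by (simp only: carrier_mat_def mem_Collect_eq dim_submatrix rows cols)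
  show "submatrix M X Y $$ (a, b) = M $$ (pick X a, pick Y b)" if "a < card X" "b < card Y"
    by (rule submatrix_index) (simp_all only: rows cols that)
qed

lemma pick_less:
  assumes "X \<subseteq> {0..<m}" and "a < card X"
  shows "pick X a < m"
  using pick_in_set_le[OF assms(2)] assms(1) by auto

lemma
  assumes "D \<in> carrier_mat m k" and "X \<subseteq> {0..<m}"
  shows carrier_submatrix_rows: "submatrix D X UNIV \<in> carrier_mat (card X) k"
    and index_submatrix_rows: "\<lbrakk>a < card X; b < k\<rbrakk> \<Longrightarrow> submatrix D X UNIV $$ (a, b) = D $$ (pick X a, b)"
proof -
  have rows: "{i. i < dim_row D \<and> i \<in> X} = X" and cols: "{j. j < dim_col D \<and> j \<in> UNIV} = {0..<k}"
    using assms by auto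
  show "submatrix D X UNIV \<in> carrier_mat (card X) k"
    by (intro carrier_matI) (simp_all only: dim_submatrix rows cols card_atLeastLessThan diff_zero)
  show "submatrix D X UNIV $$ (a, b) = D $$ (pick X a, b)" if "a < card X" "b < k"
  proof -
    have "submatrix D X UNIV $$ (a, b) = D $$ (pick X a, pick UNIV b)"
      by (rule submatrix_index) (simp_all only: rows cols card_atLeastLessThan diff_zero that)
    then show ?thesis
      by (simp only: pick_UNIV)
  qed
qed

lemma det_submatrix_permutes:
  fixes N :: "'a::comm_ring_1 mat"
  assumes N: "N \<in> carrier_mat n n" and T: "T \<subseteq> {0..<n}"
  shows "det (submatrix N T T) = (\<Sum>\<sigma> | \<sigma> permutes T. signof \<sigma> * (\<Prod>i\<in>T. N $$ (i, \<sigma> i)))"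
proof -
  have fin: "finite T"
    using T finite_subset by blast
  have "det (submatrix N T T)
      = (\<Sum>\<tau> | \<tau> permutes {0..<card T}. signof \<tau> * (\<Prod>a=0..<card T. N $$ (pick T a, pick T (\<tau> a))))"
    unfolding det_def'[OF carrier_submatrix[OF N T T]]
  proof (intro sum.cong prod.cong refl arg_cong[where f = "\<lambda>p. _ * p"])
    fix \<tau> a assume "\<tau> \<in> {\<tau>. \<tau> permutes {0..<card T}}" and a: "a \<in> {0..<card T}"
    then have "\<tau> a < card T"
      using permutes_in_image by fastforce
    with a show "submatrix N T T $$ (a, \<tau> a) = N $$ (pick T a, pick T (\<tau> a))"
      by (simp add: index_submatrix[OF N T T])
  qed
  also have "\<dots> = (\<Sum>\<sigma> | \<sigma> permutes T. signof \<sigma> * (\<Prod>i\<in>T. N $$ (i, \<sigma> i)))"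
    by (rule sum_permutes_reindex_bij_betw[OF bij_betw_pick[OF fin], symmetric]) simp
  finally show ?thesis .
qed

lemma prod_if_const_zero:
  assumes "finite S"
  shows "(\<Prod>i\<in>S. if P i then c else 0) = (if \<forall>i\<in>S. P i then c ^ card S else (0::'a::comm_semiring_1))"
  using assms by (auto intro!: prod_zero)

lemma permutes_iff_fixes_outside:
  assumes "T \<subseteq> U"
  shows "(\<sigma> permutes U \<and> (\<forall>i\<in>U - T. \<sigma> i = i)) \<longleftrightarrow> \<sigma> permutes T"
  using assms permutes_subset[of \<sigma> T U] unfolding permutes_def by blast

lemma det_smult_one_add:
  fixes N :: "'a::comm_ring_1 mat"
  assumes N: "N \<in> carrier_mat n n"
  shows "det (x \<cdot>\<^sub>m 1\<^sub>m n + N) = (\<Sum>T\<in>Pow {0..<n}. x ^ (n - card T) * det (submatrix N T T))"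
proof -
  let ?P = "{\<sigma>. \<sigma> permutes {0..<n}}"
  let ?d = "\<lambda>\<sigma> i. if \<sigma> i = i then x else 0"
  let ?t = "\<lambda>\<sigma> T. signof \<sigma> * ((\<Prod>i\<in>T. N $$ (i, \<sigma> i)) * (\<Prod>i\<in>{0..<n} - T. ?d \<sigma> i))"
  have "det (x \<cdot>\<^sub>m 1\<^sub>m n + N) = (\<Sum>\<sigma>\<in>?P. signof \<sigma> * (\<Prod>i=0..<n. N $$ (i, \<sigma> i) + ?d \<sigma> i))"
    unfolding det_def'[OF add_carrier_mat[OF N]]
  proof (intro sum.cong prod.cong refl arg_cong[where f = "\<lambda>p. _ * p"])
    fix \<sigma> i assume "\<sigma> \<in> ?P" and i: "i \<in> {0..<n}"
    then have "\<sigma> i < n"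
      using permutes_in_image by fastforce
    with i N show "(x \<cdot>\<^sub>m 1\<^sub>m n + N) $$ (i, \<sigma> i) = N $$ (i, \<sigma> i) + ?d \<sigma> i"
      by auto
  qed
  also have "\<dots> = (\<Sum>T\<in>Pow {0..<n}. \<Sum>\<sigma>\<in>?P. ?t \<sigma> T)"
    by (simp only: prod_add[OF finite_atLeastLessThan] sum_distrib_left sum.swap[of _ ?P])
  also have "\<dots> = (\<Sum>T\<in>Pow {0..<n}. x ^ (n - card T) * det (submatrix N T T))"
  proof (rule sum.cong[OF refl])
    fix T assume "T \<in> Pow {0..<n}"
    then have T: "T \<subseteq> {0..<n}" by simp
    have "(\<Sum>\<sigma>\<in>?P. ?t \<sigma> T) = (\<Sum>\<sigma>\<in>?P. if \<forall>i\<in>{0..<n} - T. \<sigma> i = i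
        then x ^ (n - card T) * (signof \<sigma> * (\<Prod>i\<in>T. N $$ (i, \<sigma> i))) else 0)"
      using T by (intro sum.cong) (simp_all add: prod_if_const_zero card_Diff_subset finite_subset)
    also have "\<dots> = (\<Sum>\<sigma>\<in>{\<sigma>\<in>?P. \<forall>i\<in>{0..<n} - T. \<sigma> i = i}.
        x ^ (n - card T) * (signof \<sigma> * (\<Prod>i\<in>T. N $$ (i, \<sigma> i))))"
      by (rule sum.inter_filter[symmetric]) (simp add: finite_permutations)
    also have "{\<sigma>\<in>?P. \<forall>i\<in>{0..<n} - T. \<sigma> i = i} = {\<sigma>. \<sigma> permutes T}"
      using permutes_iff_fixes_outside[OF T] by blast
    finally show "(\<Sum>\<sigma>\<in>?P. ?t \<sigma> T) = x ^ (n - card T) * det (submatrix N T T)"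
      by (simp only: det_submatrix_permutes[OF N T] sum_distrib_left)
  qed
  finally show ?thesis .
qed

section \<open>Cauchy--Binet for Gram matrices\<close>

lemma submatrix_mult:
  assumes "M \<in> carrier_mat m k" and "N \<in> carrier_mat k n"
  shows "submatrix (M * N) I J = submatrix M I UNIV * submatrix N UNIV J"
proof (rule eq_matI)
  fix a b assume "a < dim_row (submatrix M I UNIV * submatrix N UNIV J)"
    and "b < dim_col (submatrix M I UNIV * submatrix N UNIV J)"
  then have a: "a < card {i. i < m \<and> i \<in> I}" and b: "b < card {j. j < n \<and> j \<in> J}"
    using assms by (simp_all add: dim_submatrix)
  then have "pick I a < m" and "pick J b < n"
    using pick_le by (simp_all add: conj_commute)
  with a b assms show "submatrix (M * N) I J $$ (a, b) = (submatrix M I UNIV * submatrix N UNIV J) $$ (a, b)"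
    by (auto simp: dim_submatrix submatrix_index scalar_prod_def pick_UNIV intro!: sum.cong)
qed (use assms in \<open>simp_all add: dim_submatrix\<close>)

lemma submatrix_transpose_mat:
  "submatrix (transpose_mat M) I J = transpose_mat (submatrix M J I)"
  by (rule eq_matI) (simp_all add: dim_submatrix submatrix_index pick_le)

lemma injection_eq_pick_comp_permutes:
  assumes inj: "inj_on f {0..<k}"
  obtains \<pi> where "\<pi> permutes {0..<k}" and "\<And>i. i < k \<Longrightarrow> f i = pick (f ` {0..<k}) (\<pi> i)"
proof -
  let ?K = "{0..<k}" and ?X = "f ` {0..<k}"
  let ?\<pi> = "\<lambda>i. if i < k then inv_into ?K (pick ?X) (f i) else i"
  have "card ?X = k"
    using card_image[OF inj] by simp
  then have pick: "bij_betw (pick ?X) ?K ?X"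
    using bij_betw_pick[of ?X] by simp
  have "bij_betw (inv_into ?K (pick ?X) \<circ> f) ?K ?K"
    using bij_betw_imageI[OF inj refl] bij_betw_inv_into[OF pick] by (rule bij_betw_trans)
  then have "bij_betw ?\<pi> ?K ?K"
    by (rule bij_betw_cong[THEN iffD1, rotated]) simp
  then have "?\<pi> permutes ?K"
    by (rule bij_imp_permutes) simp
  moreover have "f i = pick ?X (?\<pi> i)" if "i < k" for i
    using that pick by (simp add: bij_betw_def f_inv_into_f)
  ultimately show ?thesis
    using that by blast
qed

lemma pick_comp_permutes_image:
  assumes "finite X" and "card X = k" and \<pi>: "\<pi> permutes {0..<k}"
  shows "(\<lambda>i. if i < k then pick X (\<pi> i) else i) ` {0..<k} = X"
proof -
  have "(\<lambda>i. if i < k then pick X (\<pi> i) else i) ` {0..<k} = pick X ` \<pi> ` {0..<k}"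
    unfolding image_image by (rule image_cong) simp_all
  also have "\<dots> = X"
    using bij_betw_pick[OF \<open>finite X\<close>] \<open>card X = k\<close> by (simp add: permutes_image[OF \<pi>] bij_betw_def)
  finally show ?thesis .
qed

lemma pick_comp_permutes_eq_iff:
  assumes X: "finite X" "card X = k" and X': "finite X'" "card X' = k"
    and \<pi>: "\<pi> permutes {0..<k}" and \<pi>': "\<pi>' permutes {0..<k}"
  shows "(\<lambda>i. if i < k then pick X (\<pi> i) else i) = (\<lambda>i. if i < k then pick X' (\<pi>' i) else i)
    \<longleftrightarrow> X = X' \<and> \<pi> = \<pi>'"
proof
  assume eq: "(\<lambda>i. if i < k then pick X (\<pi> i) else i) = (\<lambda>i. if i < k then pick X' (\<pi>' i) else i)"
  then have "X = X'"
    by (metis pick_comp_permutes_image[OF X \<pi>] pick_comp_permutes_image[OF X' \<pi>'])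
  have "\<pi> i = \<pi>' i" for i
  proof (cases "i < k")
    case True
    then have "pick X (\<pi> i) = pick X (\<pi>' i)"
      using fun_cong[OF eq, of i] \<open>X = X'\<close> by simp
    moreover have "\<pi> i \<in> {0..<k}" "\<pi>' i \<in> {0..<k}"
      using True permutes_in_image[OF \<pi>] permutes_in_image[OF \<pi>'] by simp_all
    ultimately show ?thesis
      using bij_betw_pick[OF \<open>finite X\<close>] X(2) by (auto simp: bij_betw_def dest: inj_onD)
  next
    case False
    then show ?thesis
      using permutes_not_in[OF \<pi>] permutes_not_in[OF \<pi>'] by simp
  qed
  with \<open>X = X'\<close> show "X = X' \<and> \<pi> = \<pi>'"
    by blast
qed auto

lemma inj_on_pick_comp_permutes:
  "inj_on (\<lambda>(X, \<pi>) i. if i < k then pick X (\<pi> i) else i)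
     (SIGMA X:{X. X \<subseteq> {0..<m} \<and> card X = k}. {\<pi>. \<pi> permutes {0..<k}})"
  (is "inj_on ?\<phi> ?S")
proof (rule inj_onI)
  have fin: "X \<subseteq> {0..<m} \<Longrightarrow> finite X" for X
    using finite_subset by blast
  fix p p' assume "p \<in> ?S" "p' \<in> ?S" "?\<phi> p = ?\<phi> p'"
  moreover obtain X \<pi> X' \<pi>' where p: "p = (X, \<pi>)" and p': "p' = (X', \<pi>')"
    by fastforce
  ultimately have X: "X \<subseteq> {0..<m}" "card X = k" and X': "X' \<subseteq> {0..<m}" "card X' = k"
    and \<pi>: "\<pi> permutes {0..<k}" "\<pi>' permutes {0..<k}"
    and eq: "(\<lambda>i. if i < k then pick X (\<pi> i) else i) = (\<lambda>i. if i < k then pick X' (\<pi>' i) else i)"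
    by simp_all
  show "p = p'"
    using eq pick_comp_permutes_eq_iff[OF fin[OF X(1)] X(2) fin[OF X'(1)] X'(2) \<pi>] by (simp add: p p')
qed

text \<open>
  The injections are normalised to be the identity outside \<open>{0..<k}\<close>, matching the index
  functions of \<open>det_linear_rows_sum\<close>.
\<close>

lemma bij_betw_pick_permutes_injections:
  "bij_betw (\<lambda>(X, \<pi>) i. if i < k then pick X (\<pi> i) else i)
     (SIGMA X:{X. X \<subseteq> {0..<m} \<and> card X = k}. {\<pi>. \<pi> permutes {0..<k}})
     {f. (\<forall>i\<in>{0..<k}. f i \<in> {0..<m}) \<and> (\<forall>i. i \<notin> {0..<k} \<longrightarrow> f i = i) \<and> inj_on f {0..<k}}"
  (is "bij_betw ?\<phi> ?S ?I")
proof -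
  have fin: "X \<subseteq> {0..<m} \<Longrightarrow> finite X" for X
    using finite_subset by blast
  have "inj_on ?\<phi> ?S"
    by (rule inj_on_pick_comp_permutes)
  moreover have "?\<phi> ` ?S = ?I"
  proof
    show "?\<phi> ` ?S \<subseteq> ?I"
    proof
      fix f assume "f \<in> ?\<phi> ` ?S"
      then obtain X \<pi> where X: "X \<subseteq> {0..<m}" "card X = k" and \<pi>: "\<pi> permutes {0..<k}"
        and f: "f = ?\<phi> (X, \<pi>)"
        by blast
      have "f ` {0..<k} = X"
        using pick_comp_permutes_image[OF fin[OF X(1)] X(2) \<pi>] f by simp
      then have "inj_on f {0..<k}"
        using X(2) by (intro eq_card_imp_inj_on) simp_all
      moreover have "f i \<in> {0..<m}" if "i \<in> {0..<k}" for i
        using imageI[OF that, of f] \<open>f ` {0..<k} = X\<close> X(1) by auto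
      ultimately show "f \<in> ?I"
        by (simp add: f)
    qed
    show "?I \<subseteq> ?\<phi> ` ?S"
    proof
      fix f assume f: "f \<in> ?I"
      then obtain \<pi> where \<pi>: "\<pi> permutes {0..<k}" and eq: "\<And>i. i < k \<Longrightarrow> f i = pick (f ` {0..<k}) (\<pi> i)"
        using injection_eq_pick_comp_permutes by blast
      have "f = ?\<phi> (f ` {0..<k}, \<pi>)"
        using f eq by (simp add: fun_eq_iff)
      moreover have "(f ` {0..<k}, \<pi>) \<in> ?S"
        using f \<pi> by (auto simp: card_image)
      ultimately show "f \<in> ?\<phi> ` ?S"
        by blast
    qed
  qed
  ultimately show ?thesis
    by (simp add: bij_betw_def)
qed

lemma det_transpose_mult_self_sum_functions:
  fixes D :: "'a::comm_ring_1 mat"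
  assumes D: "D \<in> carrier_mat m k"
  shows "det (transpose_mat D * D)
    = (\<Sum>f | (\<forall>i\<in>{0..<k}. f i \<in> {0..<m}) \<and> (\<forall>i. i \<notin> {0..<k} \<longrightarrow> f i = i).
        (\<Prod>i=0..<k. D $$ (f i, i)) * det (mat\<^sub>r k k (\<lambda>i. row D (f i))))"
proof -
  have rows: "row D l \<in> carrier_vec k" for l
    using D by (metis carrier_matD(2) carrier_vec_dim_vec index_row(2))
  have "transpose_mat D * D
      = mat\<^sub>r k k (\<lambda>i. finsum_vec TYPE('a) k (\<lambda>l. transpose_mat D $$ (i, l) \<cdot>\<^sub>v row D l) {0..<m})"
    by (rule mat_mul_finsum_alt) (use D in auto)
  also have "det \<dots> = (\<Sum>f | (\<forall>i\<in>{0..<k}. f i \<in> {0..<m}) \<and> (\<forall>i. i \<notin> {0..<k} \<longrightarrow> f i = i).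
          det (mat\<^sub>r k k (\<lambda>i. transpose_mat D $$ (i, f i) \<cdot>\<^sub>v row D (f i))))"
    by (rule det_linear_rows_sum) (simp_all add: rows)
  also have "\<dots> = (\<Sum>f | (\<forall>i\<in>{0..<k}. f i \<in> {0..<m}) \<and> (\<forall>i. i \<notin> {0..<k} \<longrightarrow> f i = i).
          (\<Prod>i=0..<k. D $$ (f i, i)) * det (mat\<^sub>r k k (\<lambda>i. row D (f i))))"
  proof (rule sum.cong[OF refl])
    fix f assume "f \<in> {f. (\<forall>i\<in>{0..<k}. f i \<in> {0..<m}) \<and> (\<forall>i. i \<notin> {0..<k} \<longrightarrow> f i = i)}"
    then have "(\<Prod>i=0..<k. transpose_mat D $$ (i, f i)) = (\<Prod>i=0..<k. D $$ (f i, i))"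
      using D by (intro prod.cong) auto
    moreover have "det (mat\<^sub>r k k (\<lambda>i. transpose_mat D $$ (i, f i) \<cdot>\<^sub>v row D (f i)))
        = (\<Prod>i=0..<k. transpose_mat D $$ (i, f i)) * det (mat\<^sub>r k k (\<lambda>i. row D (f i)))"
      by (rule det_rows_mul) (simp add: rows)
    ultimately show "det (mat\<^sub>r k k (\<lambda>i. transpose_mat D $$ (i, f i) \<cdot>\<^sub>v row D (f i)))
        = (\<Prod>i=0..<k. D $$ (f i, i)) * det (mat\<^sub>r k k (\<lambda>i. row D (f i)))"
      by simp
  qed
  finally show ?thesis .
qed

lemma det_rows_noninjective:
  assumes "\<not> inj_on f {0..<k}"
  shows "det (mat\<^sub>r k k (\<lambda>i. row D (f i))) = 0"
proof -
  obtain i j where "i < k" "j < k" "i \<noteq> j" "f i = f j"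
    using assms by (auto simp: inj_on_def)
  then show ?thesis
    by (intro det_identical_rows[of _ k i j]) auto
qed

lemma mat_of_row_fun_cong:
  "(\<And>i. i < nr \<Longrightarrow> f i = g i) \<Longrightarrow> mat\<^sub>r nr nc f = mat\<^sub>r nr nc g"
  by (rule eq_matI) simp_all

lemma sum_permutes_pick_rows:
  fixes D :: "'a::comm_ring_1 mat"
  assumes D: "D \<in> carrier_mat m k" and X: "X \<subseteq> {0..<m}" "card X = k"
  shows "(\<Sum>\<pi> | \<pi> permutes {0..<k}.
      (\<Prod>i=0..<k. D $$ (pick X (\<pi> i), i)) * det (mat\<^sub>r k k (\<lambda>i. row D (pick X (\<pi> i)))))
    = det (submatrix D X UNIV) ^ 2"
proof -
  let ?S = "submatrix D X UNIV"
  have S: "?S \<in> carrier_mat k k"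
    using carrier_submatrix_rows[OF D X(1)] X(2) by simp
  have S_index: "?S $$ (a, b) = D $$ (pick X a, b)" if "a < k" "b < k" for a b
    using index_submatrix_rows[OF D X(1)] that X(2) by simp
  have pick_lt: "pick X a < dim_row D" if "a < k" for a
    using pick_less[OF X(1)] that X(2) carrier_matD(1)[OF D] by simp
  have "(\<Prod>i=0..<k. D $$ (pick X (\<pi> i), i)) * det (mat\<^sub>r k k (\<lambda>i. row D (pick X (\<pi> i))))
      = det ?S * (signof \<pi> * (\<Prod>i=0..<k. transpose_mat ?S $$ (i, \<pi> i)))"
    if \<pi>: "\<pi> permutes {0..<k}" for \<pi>
  proof -
    have \<pi>k: "\<pi> i < k" if "i < k" for i
      using permutes_in_image[OF \<pi>] that by simp
    have "mat\<^sub>r k k (\<lambda>i. row D (pick X (\<pi> i))) = mat k k (\<lambda>(i, j). ?S $$ (\<pi> i, j))"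
      using carrier_matD(2)[OF D] by (intro eq_matI) (auto simp: S_index \<pi>k pick_lt)
    then have "det (mat\<^sub>r k k (\<lambda>i. row D (pick X (\<pi> i)))) = signof \<pi> * det ?S"
      by (simp add: det_permute_rows[OF S \<pi>])
    moreover have "(\<Prod>i=0..<k. D $$ (pick X (\<pi> i), i)) = (\<Prod>i=0..<k. transpose_mat ?S $$ (i, \<pi> i))"
      using S by (intro prod.cong) (auto simp: S_index \<pi>k)
    ultimately show ?thesis
      by (simp add: ac_simps)
  qed
  then have "(\<Sum>\<pi> | \<pi> permutes {0..<k}.
      (\<Prod>i=0..<k. D $$ (pick X (\<pi> i), i)) * det (mat\<^sub>r k k (\<lambda>i. row D (pick X (\<pi> i)))))
    = det ?S * det (transpose_mat ?S)"
    by (simp add: det_def'[of "transpose_mat ?S" k] S sum_distrib_left)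
  then show ?thesis
    by (simp add: det_transpose[OF S] power2_eq_square)
qed

lemma det_transpose_mult_self:
  fixes D :: "'a::comm_ring_1 mat"
  assumes D: "D \<in> carrier_mat m k"
  shows "det (transpose_mat D * D) = (\<Sum>X | X \<subseteq> {0..<m} \<and> card X = k. det (submatrix D X UNIV) ^ 2)"
proof -
  let ?F = "{f. (\<forall>i\<in>{0..<k}. f i \<in> {0..<m}) \<and> (\<forall>i. i \<notin> {0..<k} \<longrightarrow> f i = i)}"
  let ?h = "\<lambda>f. (\<Prod>i=0..<k. D $$ (f i, i)) * det (mat\<^sub>r k k (\<lambda>i. row D (f i)))"
  let ?\<phi> = "\<lambda>(X, \<pi>) i. if i < k then pick X (\<pi> i) else i"
  have fin: "finite {X. X \<subseteq> {0..<m} \<and> card X = k}"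
    by (rule finite_subset[of _ "Pow {0..<m}"]) auto
  have "det (transpose_mat D * D) = sum ?h ?F"
    by (rule det_transpose_mult_self_sum_functions[OF D])
  also have "\<dots> = sum ?h {f \<in> ?F. inj_on f {0..<k}}"
    using det_rows_noninjective[of _ k D]
    by (intro sum.mono_neutral_right finite_bounded_functions) (auto, metis mult_zero_right)
  also have "\<dots> = (\<Sum>p \<in> (SIGMA X:{X. X \<subseteq> {0..<m} \<and> card X = k}. {\<pi>. \<pi> permutes {0..<k}}). ?h (?\<phi> p))"
    using bij_betw_pick_permutes_injections[of k m]
    by (intro sum.reindex_bij_betw[symmetric]) (simp add: conj_assoc)
  also have "\<dots> = (\<Sum>(X, \<pi>) \<in> (SIGMA X:{X. X \<subseteq> {0..<m} \<and> card X = k}. {\<pi>. \<pi> permutes {0..<k}}). ?h (?\<phi> (X, \<pi>)))"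
    by (rule sum.cong) auto
  also have "\<dots> = (\<Sum>X | X \<subseteq> {0..<m} \<and> card X = k. \<Sum>\<pi> | \<pi> permutes {0..<k}. ?h (?\<phi> (X, \<pi>)))"
    by (rule sum.Sigma[symmetric]) (simp_all add: fin finite_permutations)
  also have "\<dots> = (\<Sum>X | X \<subseteq> {0..<m} \<and> card X = k. det (submatrix D X UNIV) ^ 2)"
  proof (rule sum.cong[OF refl])
    fix X assume "X \<in> {X. X \<subseteq> {0..<m} \<and> card X = k}"
    then have X: "X \<subseteq> {0..<m}" "card X = k"
      by simp_all
    have "mat\<^sub>r k k (\<lambda>i. row D (?\<phi> (X, \<pi>) i)) = mat\<^sub>r k k (\<lambda>i. row D (pick X (\<pi> i)))" for \<pi>
      by (rule mat_of_row_fun_cong) simp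
    then have "?h (?\<phi> (X, \<pi>))
        = (\<Prod>i=0..<k. D $$ (pick X (\<pi> i), i)) * det (mat\<^sub>r k k (\<lambda>i. row D (pick X (\<pi> i))))" for \<pi>
      by simp
    then show "(\<Sum>\<pi> | \<pi> permutes {0..<k}. ?h (?\<phi> (X, \<pi>))) = det (submatrix D X UNIV) ^ 2"
      by (simp add: sum_permutes_pick_rows[OF D X])
  qed
  finally show ?thesis .
qed

lemma det_submatrix_transpose_mult_self:
  fixes B :: "'a::comm_ring_1 mat"
  assumes B: "B \<in> carrier_mat m n" and T: "T \<subseteq> {0..<n}"
  shows "det (submatrix (transpose_mat B * B) T T)
    = (\<Sum>X | X \<subseteq> {0..<m} \<and> card X = card T. det (submatrix B X T) ^ 2)"
proof -
  let ?D = "submatrix B UNIV T"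
  have "{j. j < n \<and> j \<in> T} = T"
    using T by auto
  then have D: "?D \<in> carrier_mat m (card T)"
    using B by (intro carrier_matI) (simp_all add: dim_submatrix)
  have "submatrix (transpose_mat B * B) T T = transpose_mat ?D * ?D"
    using B by (simp add: submatrix_mult[of _ n m] submatrix_transpose_mat)
  then show ?thesis
    by (simp add: det_transpose_mult_self[OF D] submatrix_split[symmetric])
qed

section \<open>Minors of the scaled matrix\<close>

lemma det_mat_scale_rows_cols:
  fixes M :: "'a::comm_ring_1 mat"
  assumes M: "M \<in> carrier_mat k k"
  shows "det (mat k k (\<lambda>(i, j). u i * M $$ (i, j) * v j)) = prod u {0..<k} * prod v {0..<k} * det M"
proof -
  have "signof \<pi> * (\<Prod>i=0..<k. mat k k (\<lambda>(i, j). u i * M $$ (i, j) * v j) $$ (i, \<pi> i))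
      = prod u {0..<k} * prod v {0..<k} * (signof \<pi> * (\<Prod>i=0..<k. M $$ (i, \<pi> i)))"
    if \<pi>: "\<pi> permutes {0..<k}" for \<pi>
  proof -
    have "(\<Prod>i=0..<k. mat k k (\<lambda>(i, j). u i * M $$ (i, j) * v j) $$ (i, \<pi> i))
        = (\<Prod>i=0..<k. u i * M $$ (i, \<pi> i) * v (\<pi> i))"
      using permutes_in_image[OF \<pi>] by (intro prod.cong) auto
    also have "\<dots> = prod u {0..<k} * (\<Prod>i=0..<k. M $$ (i, \<pi> i)) * prod (v \<circ> \<pi>) {0..<k}"
      by (simp add: prod.distrib)
    also have "prod (v \<circ> \<pi>) {0..<k} = prod v {0..<k}"
      by (rule prod.permute[OF \<pi>, symmetric])
    finally show ?thesis
      by (simp add: ac_simps)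
  qed
  then show ?thesis
    by (simp add: det_def'[OF M] det_def'[of _ k] sum_distrib_left)
qed

lemma det_submatrix_scale_rows_cols:
  fixes A :: "'a::comm_ring_1 mat"
  assumes A: "A \<in> carrier_mat m n" and X: "X \<subseteq> {0..<m}" and Y: "Y \<subseteq> {0..<n}"
    and card: "card X = card Y"
  shows "det (submatrix (mat m n (\<lambda>(i, j). u i * A $$ (i, j) * v j)) X Y)
    = prod u X * prod v Y * det (submatrix A X Y)"
proof -
  let ?k = "card X"
  have fin: "finite X" "finite Y"
    using X Y finite_subset by blast+
  have pick: "pick X a < m" "pick Y a < n" if "a < ?k" for a
    using pick_less[OF X] pick_less[OF Y] that card by simp_all
  have "submatrix (mat m n (\<lambda>(i, j). u i * A $$ (i, j) * v j)) X Y
      = mat ?k ?k (\<lambda>(a, b). u (pick X a) * submatrix A X Y $$ (a, b) * v (pick Y b))"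
  proof -
    have "submatrix (mat m n (\<lambda>(i, j). u i * A $$ (i, j) * v j)) X Y \<in> carrier_mat ?k ?k"
      using carrier_submatrix[OF mat_carrier X Y] card by simp
    then show ?thesis
      using card by (intro eq_matI)
        (auto simp: index_submatrix[OF mat_carrier X Y] index_submatrix[OF A X Y] pick)
  qed
  then have "det (submatrix (mat m n (\<lambda>(i, j). u i * A $$ (i, j) * v j)) X Y)
      = (\<Prod>a=0..<?k. u (pick X a)) * (\<Prod>a=0..<card Y. v (pick Y a)) * det (submatrix A X Y)"
    using carrier_submatrix[OF A X Y] card by (simp add: det_mat_scale_rows_cols)
  also have "(\<Prod>a=0..<?k. u (pick X a)) = prod u X"
    by (rule prod.reindex_bij_betw[OF bij_betw_pick[OF fin(1)]])
  also have "(\<Prod>a=0..<card Y. v (pick Y a)) = prod v Y"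
    by (rule prod.reindex_bij_betw[OF bij_betw_pick[OF fin(2)]])
  finally show ?thesis .
qed

lemma scal_block_eq_mat_diag:
  assumes "k \<le> d"
  shows "scal_block d k c = mat_diag d (\<lambda>i. if i < k then c else 1)"
  using assms by (intro eq_matI) (auto simp: scal_block_def mat_diag_def)

lemma A_tilde_eq_mat:
  assumes A: "A \<in> carrier_mat m n" and "s \<le> m" and "r \<le> n"
  shows "A_tilde m n s r A y z
    = mat m n (\<lambda>(i, j). (if i < s then y else 1) * A $$ (i, j) * (if j < r then z else 1))"
  unfolding A_tilde_def scal_block_eq_mat_diag[OF \<open>s \<le> m\<close>] scal_block_eq_mat_diag[OF \<open>r \<le> n\<close>]
    mat_diag_mult_left[OF A]
  by (subst mat_diag_mult_right) (auto intro!: cong_mat)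

lemma prod_if_less_eq_power:
  fixes X :: "nat set"
  assumes "finite X"
  shows "(\<Prod>i\<in>X. if i < s then c else 1) = c ^ card (X \<inter> {0..<s})"
proof -
  have "(\<Prod>i\<in>X. if i < s then c else 1) = (\<Prod>i\<in>X \<inter> {0..<s}. c)"
    using assms by (simp add: prod.If_cases Int_def)
  then show ?thesis
    by simp
qed

lemma det_submatrix_A_tilde:
  assumes A: "A \<in> carrier_mat m n" and "s \<le> m" and "r \<le> n"
    and X: "X \<subseteq> {0..<m}" and Y: "Y \<subseteq> {0..<n}" and "card X = card Y"
  shows "det (submatrix (A_tilde m n s r A y z) X Y)
    = y ^ card (X \<inter> {0..<s}) * z ^ card (Y \<inter> {0..<r}) * minor A X Y"
  using assms finite_subset[OF X] finite_subset[OF Y]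
  by (simp add: A_tilde_eq_mat det_submatrix_scale_rows_cols prod_if_less_eq_power minor_def)

section \<open>Collecting the coefficients\<close>

lemma sum_subset_pairs_group_by_cards:
  fixes G :: "nat set \<Rightarrow> nat set \<Rightarrow> 'a::comm_monoid_add"
  shows "(\<Sum>Y\<in>Pow {0..<n}. \<Sum>X | X \<subseteq> {0..<m} \<and> card X = card Y. G X Y)
    = (\<Sum>j=0..n. \<Sum>p=0..s. \<Sum>q=0..r.
        \<Sum>X | X \<subseteq> {0..<m} \<and> card X = j \<and> card (X \<inter> {0..<s}) = p.
        \<Sum>Y | Y \<subseteq> {0..<n} \<and> card Y = j \<and> card (Y \<inter> {0..<r}) = q. G X Y)"
proof -
  let ?P = "SIGMA Y:Pow {0..<n}. {X. X \<subseteq> {0..<m} \<and> card X = card Y}"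
  let ?key = "\<lambda>(Y, X). (card Y, card (X \<inter> {0..<s}), card (Y \<inter> {0..<r}))"
  let ?SX = "\<lambda>j p. {X. X \<subseteq> {0..<m} \<and> card X = j \<and> card (X \<inter> {0..<s}) = p}"
  let ?SY = "\<lambda>j q. {Y. Y \<subseteq> {0..<n} \<and> card Y = j \<and> card (Y \<inter> {0..<r}) = q}"
  have fin_subsets: "finite {X. X \<subseteq> {0..<m} \<and> Q X}" for Q
    by (rule finite_subset[of _ "Pow {0..<m}"]) auto
  have card_le: "card (Z \<inter> {0..<l}) \<le> l" for Z l
    by (metis card_atLeastLessThan card_mono diff_zero finite_atLeastLessThan inf_le2)
  have keys: "?key ` ?P \<subseteq> {0..n} \<times> {0..s} \<times> {0..r}"
    using card_le by (auto intro!: card_mono[of "{0..<n}", simplified])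
  have fin: "finite ?P"
    by (rule finite_SigmaI) (simp_all add: fin_subsets)
  have "(\<Sum>(Y, X)\<in>?P. G X Y)
      = (\<Sum>\<kappa>\<in>{0..n} \<times> {0..s} \<times> {0..r}. \<Sum>(Y, X)\<in>{x \<in> ?P. ?key x = \<kappa>}. G X Y)"
    by (rule sum.group[symmetric, OF fin _ keys]) simp
  also have "\<dots> = (\<Sum>(j, p, q)\<in>{0..n} \<times> {0..s} \<times> {0..r}. \<Sum>(Y, X)\<in>?SY j q \<times> ?SX j p. G X Y)"
  proof (rule sum.cong[OF refl], clarify)
    fix j p q
    have "{x \<in> ?P. ?key x = (j, p, q)} = ?SY j q \<times> ?SX j p"
      by auto
    then show "(\<Sum>(Y, X)\<in>{x \<in> ?P. ?key x = (j, p, q)}. G X Y) = (\<Sum>(Y, X)\<in>?SY j q \<times> ?SX j p. G X Y)"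
      by simp
  qed
  also have "\<dots> = (\<Sum>j=0..n. \<Sum>p=0..s. \<Sum>q=0..r. \<Sum>X\<in>?SX j p. \<Sum>Y\<in>?SY j q. G X Y)"
    by (simp add: sum.cartesian_product[symmetric] sum.swap[of _ "?SX _ _"])
  finally show ?thesis
    by (simp add: sum.Sigma[symmetric] fin_subsets)
qed

lemma theta_eq_sum_subset_pairs:
  assumes A: "A \<in> carrier_mat m n" and s: "s \<le> m" and r: "r \<le> n"
  shows "theta m n s r A x y z
    = (\<Sum>Y\<in>Pow {0..<n}. \<Sum>X | X \<subseteq> {0..<m} \<and> card X = card Y.
        x ^ (n - card Y) * y ^ (2 * card (X \<inter> {0..<s})) * z ^ (2 * card (Y \<inter> {0..<r}))
          * (minor A X Y)\<^sup>2)"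
proof -
  let ?B = "A_tilde m n s r A y z"
  have B: "?B \<in> carrier_mat m n"
    by (simp add: A_tilde_eq_mat[OF A s r])
  have "theta m n s r A x y z = (\<Sum>Y\<in>Pow {0..<n}. x ^ (n - card Y) * det (submatrix (transpose_mat ?B * ?B) Y Y))"
    unfolding theta_def using B by (simp add: det_smult_one_add)
  also have "\<dots> = (\<Sum>Y\<in>Pow {0..<n}. \<Sum>X | X \<subseteq> {0..<m} \<and> card X = card Y.
      x ^ (n - card Y) * det (submatrix ?B X Y) ^ 2)"
    using B by (simp add: det_submatrix_transpose_mult_self sum_distrib_left)
  also have "\<dots> = (\<Sum>Y\<in>Pow {0..<n}. \<Sum>X | X \<subseteq> {0..<m} \<and> card X = card Y.
      x ^ (n - card Y) * y ^ (2 * card (X \<inter> {0..<s})) * z ^ (2 * card (Y \<inter> {0..<r}))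
        * (minor A X Y)\<^sup>2)"
    by (intro sum.cong refl)
      (simp add: det_submatrix_A_tilde[OF A s r] power_mult_distrib power_mult[symmetric] mult.commute[of 2])
  finally show ?thesis .
qed

theorem mainTheorem6:
  fixes m n s r :: nat and A :: "real mat"
  assumes "n \<le> m" and "1 \<le> s" and "s \<le> m" and "1 \<le> r" and "r \<le> n"
    and "A \<in> carrier_mat m n"
  shows "\<forall>x y z :: real. theta m n s r A x y z =
    (\<Sum>j=0..n. \<Sum>p=0..s. \<Sum>q=0..r. x ^ (n - j) * y ^ (2 * p) * z ^ (2 * q) * coeffA m n s r A j p q)"
proof (intro allI)
  fix x y z :: real
  show "theta m n s r A x y z =
    (\<Sum>j=0..n. \<Sum>p=0..s. \<Sum>q=0..r. x ^ (n - j) * y ^ (2 * p) * z ^ (2 * q) * coeffA m n s r A j p q)"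
    unfolding theta_eq_sum_subset_pairs[OF \<open>A \<in> carrier_mat m n\<close> \<open>s \<le> m\<close> \<open>r \<le> n\<close>]
      sum_subset_pairs_group_by_cards[where s = s and r = r] coeffA_def sum_distrib_left
    by (intro sum.cong refl) simp
qed

end
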